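(* Let $G$ be a tree that is perfectly symmetric at each level, with per-level child counts $N_1,\dots,N_D$ and per-level link capacities $c_1,\dots,c_D$, as described in the context. Define $\lambda^*(G)$ as the optimal value of $$\max_{\pi\in\Pi_c}\ \lambda\quad\text{s.t.}\quad \lambda\prod_{d'=d(v)+1}^{D}N_{d'}\le \bar\mu^{\pi}_{e(v)}\,c_{e(v)}\ \ \forall v\neq\text{root},\qquad \sum_{v'\in\mathcal C_v}\bar\mu^{\pi}_{e(v')}\le 1\ \ \forall v \text{ with children},$$ where the empty product (for $d(v)=D$) equals $1$. Then $$\lambda^*(G)=\min_{0\le d<D}\ \frac{c_{d+1}}{\prod_{d'=d+1}^{D}N_{d'}},$$ and this value is attained by the universal round-robin (URR) policy.
   Context: The network is a rooted tree $G$. The root (server) is at level $0$, nodes at levels $1,\dots,D-1$ are network nodes, the nodes at level $D-1$ are access points (APs), and the flows (customers) attached to the APs form level $D$, the leaves. "Perfectly symmetric at each level" means that every node at level $d$ ($0\le d\le D-1$) has exactly $N_{d+1}$ children, for fixed positive integers $N_1,\dots,N_D$. In particular each AP has $N_D$ flows, and exactly $\prod_{d'=d(v)+1}^{D}N_{d'}$ flows lie in the subtree of a node $v$ at level $d(v)$. Each non-root node $v$ has a unique uplink $e(v)$ to its parent, and $\mathcal C_v$ denotes the set of children of $v$. The capacity of $e(v)$, in packets per time slot, is $c_{e(v)}=c_{d(v)}$, for fixed positive numbers $c_1,\dots,c_D$. Time is slotted. The interference constraint is that in each slot, at most one link among the uplinks of the children of any given node may be scheduled. Links whose parents are different may be scheduled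 simultaneously. We write $\mu_e(t)\in\{0,1\}$ for the indicator that link $e$ is scheduled in slot $t$. $\Pi_c$ is the class of cyclic, work-conserving schedules obeying the interference constraint. A schedule $\pi$ is cyclic with period $K^\pi$ if $\mu^\pi(t)=\mu^\pi(t+K^\pi)$ for all $t$. Its time-average activation rate is $\bar\mu^\pi_e=\frac1{K^\pi}\sum_{t=0}^{K^\pi-1}\mu^\pi_e(t)$. The universal round-robin (URR) policy schedules, at every node, the uplinks of its children in a fixed cyclic round-robin order. Hence the uplink of every level-$d$ node is scheduled exactly once every $N_d$ slots. *)

theory Defs
  imports Complex_Main
begin

text \<open>Nodes of the perfectly symmetric tree are encoded by their path from the root:
  a node at level d is a list xs of length d with xs!i < N (i+1).  The root is [],
  levels 1..D-1 are network nodes (level D-1 = access points), level D are the flows.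
  The uplink e(v) of a non-root node v is identified with v itself.\<close>

definition tree_nodes :: "(nat \<Rightarrow> nat) \<Rightarrow> nat \<Rightarrow> nat list set" where
  "tree_nodes N D = {xs. length xs \<le> D \<and> (\<forall>i<length xs. xs ! i < N (Suc i))}"

definition flows_below :: "(nat \<Rightarrow> nat) \<Rightarrow> nat \<Rightarrow> nat \<Rightarrow> nat" where
  "flows_below N D d = (\<Prod>d'\<in>{d+1..D}. N d')"

text \<open>A schedule is a pair (mu, K): mu t v says the uplink of node v is active in slot t,
  K is its period.\<close>
type_synonym schedule = "(nat \<Rightarrow> nat list \<Rightarrow> bool) \<times> nat"

definition cyclic :: "schedule \<Rightarrow> bool" where
  "cyclic \<pi> = (snd \<pi> > 0 \<and> (\<forall>t v. fst \<pi> (t + snd \<pi>) v = fst \<pi> t v))"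

definition interference_ok :: "(nat \<Rightarrow> nat) \<Rightarrow> nat \<Rightarrow> schedule \<Rightarrow> bool" where
  "interference_ok N D \<pi> = (\<forall>t. \<forall>v\<in>tree_nodes N D. length v < D \<longrightarrow>
      card {i. i < N (Suc (length v)) \<and> fst \<pi> t (v @ [i])} \<le> 1)"

definition work_conserving :: "(nat \<Rightarrow> nat) \<Rightarrow> nat \<Rightarrow> schedule \<Rightarrow> bool" where
  "work_conserving N D \<pi> = (\<forall>t. \<forall>v\<in>tree_nodes N D. length v < D \<longrightarrow>
      (\<exists>i < N (Suc (length v)). fst \<pi> t (v @ [i])))"

definition Pi_c :: "(nat \<Rightarrow> nat) \<Rightarrow> nat \<Rightarrow> schedule set" where
  "Pi_c N D = {\<pi>. cyclic \<pi> \<and> work_conserving N D \<pi> \<and> interference_ok N D \<pi>}"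

definition mu_bar :: "schedule \<Rightarrow> nat list \<Rightarrow> real" where
  "mu_bar \<pi> v = (\<Sum>t<snd \<pi>. if fst \<pi> t v then 1 else 0) / real (snd \<pi>)"

definition feasible :: "(nat \<Rightarrow> nat) \<Rightarrow> (nat \<Rightarrow> real) \<Rightarrow> nat \<Rightarrow> schedule \<Rightarrow> real \<Rightarrow> bool" where
  "feasible N c D \<pi> lam =
    ((\<forall>v\<in>tree_nodes N D. v \<noteq> [] \<longrightarrow>
        lam * real (flows_below N D (length v)) \<le> mu_bar \<pi> v * c (length v)) \<and>
     (\<forall>v\<in>tree_nodes N D. length v < D \<longrightarrow>
        (\<Sum>i<N (Suc (length v)). mu_bar \<pi> (v @ [i])) \<le> 1))"

definition lambda_star :: "(nat \<Rightarrow> nat) \<Rightarrow> (nat \<Rightarrow> real) \<Rightarrow> nat \<Rightarrow> real" where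
  "lambda_star N c D = (GREATEST lam. \<exists>\<pi>\<in>Pi_c N D. feasible N c D \<pi> lam)"

definition URR :: "(nat \<Rightarrow> nat) \<Rightarrow> nat \<Rightarrow> schedule" where
  "URR N D = ((\<lambda>t v. v \<noteq> [] \<and> length v \<le> D \<and> t mod N (length v) = last v), \<Prod>d\<in>{1..D}. N d)"

end

theory Submission
  imports Defs
begin

text \<open>Fix a node at level d < D. Adding the rate constraints of its N(d+1) children and using
  that their activation rates sum to at most 1 gives lam * (N(d+1) * ... * N(D)) <= c(d+1)
  for every feasible lam, whatever the schedule. Conversely URR activates every level-k
  uplink at rate exactly 1/N(k), which meets all these bounds simultaneously, so the
  minimum over the levels is attained.\<close>

lemma sum_indicator_mod_eq:
  fixes n m r :: nat
  assumes "r < n"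
  shows "(\<Sum>t<n * m. if t mod n = r then 1 else 0) = (of_nat m :: 'a :: semiring_1)"
proof (induction m)
  case 0
  then show ?case by simp
next
  case (Suc m)
  let ?ind = "\<lambda>t. if t mod n = r then 1 else (0 :: 'a)"
  have "(\<Sum>t<n * Suc m. ?ind t) = (\<Sum>t<n * m. ?ind t) + (\<Sum>t=n * m..<n * m + n. ?ind t)"
    using sum.atLeastLessThan_concat[of 0 "n * m" "n * m + n" ?ind]
    by (simp add: atLeast0LessThan algebra_simps)
  also have "(\<Sum>t=n * m..<n * m + n. ?ind t) = (\<Sum>t<n. ?ind (t + n * m))"
    using sum.shift_bounds_nat_ivl[of ?ind 0 "n * m" n] by (simp add: atLeast0LessThan add.commute)
  also have "(\<Sum>t<n. ?ind (t + n * m)) = (\<Sum>t<n. if t = r then 1 else 0)"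
    by (rule sum.cong) auto
  also have "\<dots> = 1"
    using assms by simp
  finally show ?case
    using Suc by (simp add: add.commute)
qed

lemma flows_below_eq_mult:
  assumes "d < D"
  shows "flows_below N D d = N (Suc d) * flows_below N D (Suc d)"
  unfolding flows_below_def using assms
  by (simp add: prod.atLeast_Suc_atMost Suc_le_eq)

lemma flows_below_pos:
  assumes "\<And>d. 1 \<le> d \<Longrightarrow> d \<le> D \<Longrightarrow> N d > 0"
  shows "flows_below N D d > 0"
  unfolding flows_below_def using assms by (simp add: prod_pos)

lemma tree_nodes_length_le: "v \<in> tree_nodes N D \<Longrightarrow> length v \<le> D"
  by (simp add: tree_nodes_def)

lemma tree_nodes_last_less:
  assumes "v \<in> tree_nodes N D" "v \<noteq> []"
  shows "last v < N (length v)"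
proof -
  obtain k where k: "length v = Suc k"
    using assms(2) by (cases v) auto
  then have "v ! k < N (Suc k)"
    using assms(1) by (simp add: tree_nodes_def)
  then show ?thesis
    using assms(2) k by (simp add: last_conv_nth)
qed

lemma snoc_in_tree_nodes:
  assumes "v \<in> tree_nodes N D" "length v < D" "i < N (Suc (length v))"
  shows "v @ [i] \<in> tree_nodes N D"
  using assms by (auto simp: tree_nodes_def nth_append less_Suc_eq)

lemma replicate_zero_in_tree_nodes:
  assumes "\<And>d. 1 \<le> d \<Longrightarrow> d \<le> D \<Longrightarrow> N d > 0" "k \<le> D"
  shows "replicate k 0 \<in> tree_nodes N D"
  using assms by (auto simp: tree_nodes_def)

lemma cyclic_URR:
  assumes "\<And>d. 1 \<le> d \<Longrightarrow> d \<le> D \<Longrightarrow> N d > 0"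
  shows "cyclic (URR N D)"
  unfolding cyclic_def
proof (intro conjI allI)
  show "0 < snd (URR N D)"
    using assms by (simp add: URR_def prod_pos)
next
  fix t v
  show "fst (URR N D) (t + snd (URR N D)) v = fst (URR N D) t v"
  proof (cases "v \<noteq> [] \<and> length v \<le> D")
    case True
    then have "N (length v) dvd (\<Prod>d\<in>{1..D}. N d)"
      by (intro dvd_prodI) (auto simp: Suc_le_eq)
    then obtain q where "(\<Prod>d\<in>{1..D}. N d) = N (length v) * q"
      by (elim dvdE)
    then show ?thesis
      by (simp add: URR_def)
  next
    case False
    then show ?thesis
      unfolding URR_def fst_conv by blast
  qed
qed

lemma work_conserving_URR:
  assumes "\<And>d. 1 \<le> d \<Longrightarrow> d \<le> D \<Longrightarrow> N d > 0"
  shows "work_conserving N D (URR N D)"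
  unfolding work_conserving_def
proof (intro allI ballI impI)
  fix t and v :: "nat list"
  assume "length v < D"
  then have "t mod N (Suc (length v)) < N (Suc (length v))"
    using assms by simp
  moreover have "fst (URR N D) t (v @ [t mod N (Suc (length v))])"
    using \<open>length v < D\<close> by (simp add: URR_def)
  ultimately show "\<exists>i<N (Suc (length v)). fst (URR N D) t (v @ [i])"
    by blast
qed

lemma interference_ok_URR: "interference_ok N D (URR N D)"
  unfolding interference_ok_def
proof (intro allI ballI impI)
  fix t and v :: "nat list"
  have "{i. i < N (Suc (length v)) \<and> fst (URR N D) t (v @ [i])} \<subseteq> {t mod N (Suc (length v))}"
    by (auto simp: URR_def)
  then show "card {i. i < N (Suc (length v)) \<and> fst (URR N D) t (v @ [i])} \<le> 1"
    using card_mono[of "{t mod N (Suc (length v))}"] by simp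
qed

lemma URR_in_Pi_c:
  assumes "\<And>d. 1 \<le> d \<Longrightarrow> d \<le> D \<Longrightarrow> N d > 0"
  shows "URR N D \<in> Pi_c N D"
  using cyclic_URR[OF assms] work_conserving_URR[OF assms] interference_ok_URR
  by (simp add: Pi_c_def)

lemma mu_bar_URR:
  assumes N: "\<And>d. 1 \<le> d \<Longrightarrow> d \<le> D \<Longrightarrow> N d > 0"
    and v: "v \<in> tree_nodes N D" "v \<noteq> []"
  shows "mu_bar (URR N D) v = 1 / real (N (length v))"
proof -
  define k where "k = length v"
  have k: "1 \<le> k" "k \<le> D"
    using v tree_nodes_length_le by (auto simp: k_def Suc_le_eq)
  define m where "m = (\<Prod>d\<in>{1..D} - {k}. N d)"
  have period: "(\<Prod>d\<in>{1..D}. N d) = N k * m"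
    unfolding m_def using k by (simp add: prod.remove)
  have "m > 0" "N k > 0"
    using N k by (auto simp: m_def prod_pos)
  have "mu_bar (URR N D) v = (\<Sum>t<N k * m. if t mod N k = last v then 1 else 0) / real (N k * m)"
    unfolding mu_bar_def URR_def using v k period by (simp add: k_def)
  also have "\<dots> = real m / real (N k * m)"
    using sum_indicator_mod_eq[where 'a = real, OF tree_nodes_last_less[OF v]] by (simp add: k_def)
  also have "\<dots> = 1 / real (N k)"
    using \<open>m > 0\<close> by simp
  finally show ?thesis
    by (simp add: k_def)
qed

lemma feasible_URR:
  assumes N: "\<And>d. 1 \<le> d \<Longrightarrow> d \<le> D \<Longrightarrow> N d > 0"
    and cap: "\<And>d. d < D \<Longrightarrow> lam * real (flows_below N D d) \<le> c (Suc d)"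
  shows "feasible N c D (URR N D) lam"
  unfolding feasible_def
proof (intro conjI ballI impI)
  fix v
  assume v: "v \<in> tree_nodes N D" "v \<noteq> []"
  define k where "k = length v"
  have k: "1 \<le> k" "k \<le> D"
    using v tree_nodes_length_le by (auto simp: k_def Suc_le_eq)
  have "N k > 0"
    using N k by simp
  have "lam * real (flows_below N D k) * real (N k) \<le> c k"
    using cap[of "k - 1"] flows_below_eq_mult[of "k - 1" D N] k by (simp add: algebra_simps)
  then have "lam * real (flows_below N D k) \<le> c k / real (N k)"
    using \<open>N k > 0\<close> by (simp add: pos_le_divide_eq)
  then show "lam * real (flows_below N D (length v)) \<le> mu_bar (URR N D) v * c (length v)"
    using mu_bar_URR[OF N v] by (simp add: k_def)
next
  fix v
  assume v: "v \<in> tree_nodes N D" "length v < D"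
  have "(\<Sum>i<N (Suc (length v)). mu_bar (URR N D) (v @ [i]))
      = (\<Sum>i<N (Suc (length v)). 1 / real (N (Suc (length v))))"
    using mu_bar_URR[OF N snoc_in_tree_nodes[OF v]] by simp
  also have "\<dots> = 1"
    using N v by simp
  finally show "(\<Sum>i<N (Suc (length v)). mu_bar (URR N D) (v @ [i])) \<le> 1"
    by simp
qed

lemma feasible_imp_capacity_bound:
  assumes fe: "feasible N c D \<pi> lam"
    and N: "\<And>d. 1 \<le> d \<Longrightarrow> d \<le> D \<Longrightarrow> N d > 0"
    and d: "d < D" and "c (Suc d) \<ge> 0"
  shows "lam * real (flows_below N D d) \<le> c (Suc d)"
proof -
  define v where "v = replicate d (0::nat)"
  have v: "v \<in> tree_nodes N D" "length v = d"
    using replicate_zero_in_tree_nodes[OF N] d by (simp_all add: v_def)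
  have child_rate: "lam * real (flows_below N D (Suc d)) \<le> mu_bar \<pi> (v @ [i]) * c (Suc d)"
    if "i < N (Suc d)" for i
    using fe snoc_in_tree_nodes[of v N D i] v d that unfolding feasible_def by auto
  have "lam * real (flows_below N D d) = (\<Sum>i<N (Suc d). lam * real (flows_below N D (Suc d)))"
    using flows_below_eq_mult[OF d] by simp
  also have "\<dots> \<le> (\<Sum>i<N (Suc d). mu_bar \<pi> (v @ [i])) * c (Suc d)"
    unfolding sum_distrib_right using child_rate by (intro sum_mono) simp
  also have "\<dots> \<le> c (Suc d)"
    using mult_right_mono[of _ 1 "c (Suc d)"] fe v d \<open>c (Suc d) \<ge> 0\<close>
    unfolding feasible_def by auto
  finally show ?thesis .
qed

lemma le_Min_divide_iff:
  fixes a :: "nat \<Rightarrow> real"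
  assumes "D > 0" "\<And>d. d < D \<Longrightarrow> b d > 0"
  shows "x \<le> (MIN d\<in>{..<D}. a d / b d) \<longleftrightarrow> (\<forall>d<D. x * b d \<le> a d)"
  using assms by (subst Min.bounded_iff) (auto simp: pos_le_divide_eq)

theorem lemma2:
  fixes N :: "nat \<Rightarrow> nat" and c :: "nat \<Rightarrow> real" and D :: nat
  assumes "D \<ge> 1"
    and "\<And>d. 1 \<le> d \<Longrightarrow> d \<le> D \<Longrightarrow> N d > 0"
    and "\<And>d. 1 \<le> d \<Longrightarrow> d \<le> D \<Longrightarrow> c d > 0"
  shows "lambda_star N c D = (MIN d\<in>{..<D}. c (d + 1) / real (\<Prod>d'\<in>{d+1..D}. N d'))
     \<and> URR N D \<in> Pi_c N D
     \<and> feasible N c D (URR N D) (MIN d\<in>{..<D}. c (d + 1) / real (\<Prod>d'\<in>{d+1..D}. N d'))"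
proof -
  define M where "M = (MIN d\<in>{..<D}. c (Suc d) / real (flows_below N D d))"
  have le_M_iff: "lam \<le> M \<longleftrightarrow> (\<forall>d<D. lam * real (flows_below N D d) \<le> c (Suc d))" for lam
    unfolding M_def using assms(1) flows_below_pos[OF assms(2)]
    by (intro le_Min_divide_iff) auto
  have URR: "URR N D \<in> Pi_c N D"
    using URR_in_Pi_c[OF assms(2)] .
  have "\<forall>d<D. M * real (flows_below N D d) \<le> c (Suc d)"
    using le_M_iff by blast
  then have feasible_M: "feasible N c D (URR N D) M"
    using feasible_URR[of D N M c] assms(2) by blast
  have "lam \<le> M" if "feasible N c D \<pi> lam" for \<pi> lam
    using feasible_imp_capacity_bound[OF that assms(2)] assms(3) le_M_iff
    by (simp add: less_imp_le)
  then have "lambda_star N c D = M"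
    unfolding lambda_star_def using URR feasible_M by (intro Greatest_equality) auto
  then show ?thesis
    using URR feasible_M by (simp add: M_def flows_below_def)
qed

end
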